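(* Let $(X,d)$ be a locally compact, geodesically complete CAT(0)-space connected at infinity, and let $d'$ be a metric on $X$ such that $(X,d')$ is a locally compact geodesically complete CAT(0)-space and $d(x,y)\le1\iff d'(x,y)\le1$ for all $x,y\in X$. Let $\{x_z\}_{z\in\mathbb Z}$ and $\{y_z\}_{z\in\mathbb Z}$ be $r$-sequences in $(X,d)$. Then they are parallel-equivalent with respect to $d$ if and only if they are parallel-equivalent with respect to $d'$.
   Context: With the normalization $r=1$, an $r$-sequence in a metric space $(X,D)$ is a sequence $\{x_z\}_{z\in\mathbb Z}$ with $D(x_{z_1},x_{z_2})=|z_1-z_2|$ for all $z_1,z_2\in\mathbb Z$. Two $r$-sequences are parallel-equivalent (with respect to $D$) if the Hausdorff distance (for $D$) between the sets $\{x_z\}$ and $\{y_z\}$ is finite. Geodesically complete: geodesic and every geodesic segment lies in a complete geodesic; connected at infinity: complement of every metric ball path connected. *)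

theory Defs
  imports "HOL-Analysis.Analysis"
begin

definition geodesic_seg :: "'a set \<Rightarrow> ('a \<Rightarrow> 'a \<Rightarrow> real) \<Rightarrow> (real \<Rightarrow> 'a) \<Rightarrow> real \<Rightarrow> real \<Rightarrow> bool" where
  "geodesic_seg X d g a b \<longleftrightarrow> a \<le> b \<and> g ` {a..b} \<subseteq> X \<and>
     (\<forall>s\<in>{a..b}. \<forall>t\<in>{a..b}. d (g s) (g t) = \<bar>s - t\<bar>)"

definition geodesic_from_to :: "'a set \<Rightarrow> ('a \<Rightarrow> 'a \<Rightarrow> real) \<Rightarrow> (real \<Rightarrow> 'a) \<Rightarrow> 'a \<Rightarrow> 'a \<Rightarrow> bool" where
  "geodesic_from_to X d g x y \<longleftrightarrow> geodesic_seg X d g 0 (d x y) \<and> g 0 = x \<and> g (d x y) = y"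

definition geodesic_space :: "'a set \<Rightarrow> ('a \<Rightarrow> 'a \<Rightarrow> real) \<Rightarrow> bool" where
  "geodesic_space X d \<longleftrightarrow> Metric_space X d \<and>
     (\<forall>x\<in>X. \<forall>y\<in>X. \<exists>g. geodesic_from_to X d g x y)"

definition geodesic_line :: "'a set \<Rightarrow> ('a \<Rightarrow> 'a \<Rightarrow> real) \<Rightarrow> (real \<Rightarrow> 'a) \<Rightarrow> bool" where
  "geodesic_line X d c \<longleftrightarrow> range c \<subseteq> X \<and> (\<forall>s t. d (c s) (c t) = \<bar>s - t\<bar>)"

definition geodesically_complete :: "'a set \<Rightarrow> ('a \<Rightarrow> 'a \<Rightarrow> real) \<Rightarrow> bool" where
  "geodesically_complete X d \<longleftrightarrow> geodesic_space X d \<and>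
     (\<forall>g a b. geodesic_seg X d g a b \<and> a < b \<longrightarrow>
        (\<exists>c. geodesic_line X d c \<and> g ` {a..b} \<subseteq> range c))"

text \<open>Point of the Euclidean segment from p to q (in the plane, modelled by complex)
  at distance s from p.\<close>
definition seg_pt :: "complex \<Rightarrow> complex \<Rightarrow> real \<Rightarrow> complex" where
  "seg_pt p q s = p + complex_of_real (s / cmod (q - p)) * (q - p)"

definition CAT0 :: "'a set \<Rightarrow> ('a \<Rightarrow> 'a \<Rightarrow> real) \<Rightarrow> bool" where
  "CAT0 X d \<longleftrightarrow> geodesic_space X d \<and>
     (\<forall>x y z g1 g2 g3 a b c.
        x \<in> X \<and> y \<in> X \<and> z \<in> X \<and>
        geodesic_from_to X d g1 x y \<and> geodesic_from_to X d g2 y z \<and> geodesic_from_to X d g3 z x \<and>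
        cmod (a - b) = d x y \<and> cmod (b - c) = d y z \<and> cmod (c - a) = d z x \<longrightarrow>
        (let T = {(g1 s, seg_pt a b s) | s. s \<in> {0..d x y}} \<union>
                 {(g2 s, seg_pt b c s) | s. s \<in> {0..d y z}} \<union>
                 {(g3 s, seg_pt c a s) | s. s \<in> {0..d z x}}
         in \<forall>(p, p') \<in> T. \<forall>(q, q') \<in> T. d p q \<le> cmod (p' - q')))"

definition locally_compact_metric :: "'a set \<Rightarrow> ('a \<Rightarrow> 'a \<Rightarrow> real) \<Rightarrow> bool" where
  "locally_compact_metric X d \<longleftrightarrow> locally_compact_space (Metric_space.mtopology X d)"

definition connected_at_infinity :: "'a set \<Rightarrow> ('a \<Rightarrow> 'a \<Rightarrow> real) \<Rightarrow> bool" where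
  "connected_at_infinity X d \<longleftrightarrow>
     (\<forall>x\<in>X. \<forall>r. path_connectedin (Metric_space.mtopology X d) (X - Metric_space.mcball X d x r))"

text \<open>r-sequence with r = 1.\<close>
definition r_sequence :: "'a set \<Rightarrow> ('a \<Rightarrow> 'a \<Rightarrow> real) \<Rightarrow> (int \<Rightarrow> 'a) \<Rightarrow> bool" where
  "r_sequence X d xs \<longleftrightarrow> range xs \<subseteq> X \<and>
     (\<forall>z1 z2. d (xs z1) (xs z2) = \<bar>real_of_int (z1 - z2)\<bar>)"

definition finite_hausdorff_dist :: "('a \<Rightarrow> 'a \<Rightarrow> real) \<Rightarrow> 'a set \<Rightarrow> 'a set \<Rightarrow> bool" where
  "finite_hausdorff_dist d A B \<longleftrightarrow>
     (\<exists>C. (\<forall>p\<in>A. \<exists>q\<in>B. d p q \<le> C) \<and> (\<forall>q\<in>B. \<exists>p\<in>A. d p q \<le> C))"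

definition parallel_equiv :: "('a \<Rightarrow> 'a \<Rightarrow> real) \<Rightarrow> (int \<Rightarrow> 'a) \<Rightarrow> (int \<Rightarrow> 'a) \<Rightarrow> bool" where
  "parallel_equiv d xs ys \<longleftrightarrow> finite_hausdorff_dist d (range xs) (range ys)"

end

theory Submission
  imports Defs
begin

text \<open>Only the geodesic structure is needed: if \<open>d\<close> is geodesic and every \<open>d\<close>-step of length
  at most 1 is an \<open>e\<close>-step of length at most 1, then cutting a \<open>d\<close>-geodesic into unit pieces
  gives \<open>e \<le> d + 1\<close>. Hence finite Hausdorff distance passes from \<open>d\<close> to \<open>d'\<close> and back, for any
  two subsets of \<open>X\<close>.\<close>

lemma geodesic_space_imp_Metric_space:
  "geodesic_space X d \<Longrightarrow> Metric_space X d"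
  by (simp add: geodesic_space_def)

lemma CAT0_imp_geodesic_space:
  "CAT0 X d \<Longrightarrow> geodesic_space X d"
  by (simp add: CAT0_def)

lemma geodesic_space_obtain_point_between:
  assumes "geodesic_space X d" "x \<in> X" "y \<in> X" "0 \<le> t" "t \<le> d x y"
  obtains p where "p \<in> X" "d x p = t" "d p y = d x y - t"
proof -
  obtain g where g: "geodesic_from_to X d g x y"
    using assms(1-3) unfolding geodesic_space_def by blast
  have ends: "0 \<in> {0..d x y}" "t \<in> {0..d x y}" "d x y \<in> {0..d x y}"
    using assms(4,5) by auto
  have "g t \<in> X" "d (g 0) (g t) = \<bar>0 - t\<bar>" "d (g t) (g (d x y)) = \<bar>t - d x y\<bar>"
    using g ends unfolding geodesic_from_to_def geodesic_seg_def by blast+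
  moreover have "g 0 = x" "g (d x y) = y"
    using g unfolding geodesic_from_to_def by blast+
  ultimately show ?thesis
    using that[of "g t"] assms(4,5) by simp
qed

lemma geodesic_space_unit_bound_imp_nat_bound:
  assumes geo: "geodesic_space X d" and e: "Metric_space X e"
    and unit: "\<And>x y. x \<in> X \<Longrightarrow> y \<in> X \<Longrightarrow> d x y \<le> 1 \<Longrightarrow> e x y \<le> 1"
    and "x \<in> X" "y \<in> X" "d x y \<le> real n"
  shows "e x y \<le> real n"
  using assms(4-6)
proof (induction n arbitrary: x y)
  case 0
  have d: "Metric_space X d"
    using geo by (rule geodesic_space_imp_Metric_space)
  have "d x y = 0"
    using 0 Metric_space.nonneg[OF d, of x y] by simp
  then have "x = y"
    using Metric_space.zero[OF d] 0 by blast
  then show ?case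
    using Metric_space.zero[OF e, of y y] 0 by simp
next
  case (Suc n)
  show ?case
  proof (cases "d x y \<le> 1")
    case True
    then show ?thesis
      using unit[OF Suc.prems(1,2)] by simp
  next
    case False
    then obtain p where p: "p \<in> X" "d x p = 1" "d p y = d x y - 1"
      using geodesic_space_obtain_point_between[OF geo Suc.prems(1,2), of 1] by auto
    have "e x y \<le> e x p + e p y"
      using Metric_space.triangle[OF e] Suc.prems(1,2) p(1) by blast
    also have "\<dots> \<le> 1 + real n"
      using unit[of x p] Suc.IH[of p y] Suc.prems p by simp
    finally show ?thesis
      by simp
  qed
qed

lemma geodesic_space_unit_bound_imp_le_plus_one:
  assumes "geodesic_space X d" "Metric_space X e"
    and "\<And>x y. x \<in> X \<Longrightarrow> y \<in> X \<Longrightarrow> d x y \<le> 1 \<Longrightarrow> e x y \<le> 1"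
    and "x \<in> X" "y \<in> X"
  shows "e x y \<le> d x y + 1"
proof -
  have "0 \<le> d x y"
    using geodesic_space_imp_Metric_space[OF assms(1)] by (rule Metric_space.nonneg)
  then have "d x y \<le> real (nat \<lceil>d x y\<rceil>)" "real (nat \<lceil>d x y\<rceil>) \<le> d x y + 1"
    by linarith+
  then show ?thesis
    using geodesic_space_unit_bound_imp_nat_bound[OF assms] by (meson order_trans)
qed

lemma finite_hausdorff_dist_additive_bound:
  assumes "finite_hausdorff_dist d A B"
    and "\<And>p q. p \<in> A \<Longrightarrow> q \<in> B \<Longrightarrow> e p q \<le> d p q + c"
  shows "finite_hausdorff_dist e A B"
proof -
  obtain C where "\<forall>p\<in>A. \<exists>q\<in>B. d p q \<le> C" "\<forall>q\<in>B. \<exists>p\<in>A. d p q \<le> C"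
    using assms(1) unfolding finite_hausdorff_dist_def by blast
  then have "(\<forall>p\<in>A. \<exists>q\<in>B. e p q \<le> C + c) \<and> (\<forall>q\<in>B. \<exists>p\<in>A. e p q \<le> C + c)"
    using assms(2) by (meson add_right_mono order_trans)
  then show ?thesis
    unfolding finite_hausdorff_dist_def by blast
qed

lemma parallel_equiv_transfer_geodesic_unit_balls:
  assumes "geodesic_space X d" "Metric_space X e"
    and "\<And>x y. x \<in> X \<Longrightarrow> y \<in> X \<Longrightarrow> d x y \<le> 1 \<Longrightarrow> e x y \<le> 1"
    and "range xs \<subseteq> X" "range ys \<subseteq> X"
    and "parallel_equiv d xs ys"
  shows "parallel_equiv e xs ys"
  unfolding parallel_equiv_def
proof (rule finite_hausdorff_dist_additive_bound)
  show "finite_hausdorff_dist d (range xs) (range ys)"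
    using assms(6) unfolding parallel_equiv_def .
  fix p q assume "p \<in> range xs" "q \<in> range ys"
  then show "e p q \<le> d p q + 1"
    using geodesic_space_unit_bound_imp_le_plus_one[OF assms(1-3)] assms(4,5) by blast
qed

theorem lemma4:
  fixes X :: "'a set" and d d' :: "'a \<Rightarrow> 'a \<Rightarrow> real"
    and xs ys :: "int \<Rightarrow> 'a"
  assumes "CAT0 X d" "locally_compact_metric X d" "geodesically_complete X d"
    and "connected_at_infinity X d"
    and "CAT0 X d'" "locally_compact_metric X d'" "geodesically_complete X d'"
    and "\<forall>x\<in>X. \<forall>y\<in>X. d x y \<le> 1 \<longleftrightarrow> d' x y \<le> 1"
    and "r_sequence X d xs" "r_sequence X d ys"
  shows "parallel_equiv d xs ys \<longleftrightarrow> parallel_equiv d' xs ys"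
proof -
  have geo: "geodesic_space X d" "geodesic_space X d'"
    using assms(1,5) by (simp_all add: CAT0_imp_geodesic_space)
  have met: "Metric_space X d" "Metric_space X d'"
    using geo by (simp_all add: geodesic_space_imp_Metric_space)
  have ranges: "range xs \<subseteq> X" "range ys \<subseteq> X"
    using assms(9,10) unfolding r_sequence_def by auto
  have "parallel_equiv d xs ys \<Longrightarrow> parallel_equiv d' xs ys"
    by (rule parallel_equiv_transfer_geodesic_unit_balls[OF geo(1) met(2) _ ranges])
      (use assms(8) in blast)
  moreover have "parallel_equiv d' xs ys \<Longrightarrow> parallel_equiv d xs ys"
    by (rule parallel_equiv_transfer_geodesic_unit_balls[OF geo(2) met(1) _ ranges])
      (use assms(8) in blast)
  ultimately show ?thesis
    by blast
qed

end
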